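(* Consider one group of $p'$ PEs holding locally sorted string arrays with concatenation $S'$, partitioned into $r$ buckets using character-based regular sampling with sampling factor $v>0$. Then every bucket $B^j$ contains at most $\bigl(1+\frac rv\bigr)\frac{\|S'\|}{r}+\bigl(1+\frac{v+1}{r}\bigr)p'\hat{\ell}$ characters.
   Context: $\hat{\ell}$ is the length of the longest string and $\|X\|$ the number of characters of a set of strings $X$; $r$ divides $p'$. Character-based regular sampling with factor $v$: with $\omega'=\|S'\|/(p'(v+1))$, PE $i$ (holding sorted array $S_i'$) draws $\lceil\|S_i'\|/\omega'\rceil-1$ equally spaced positions in its character array, shifts each position by at most $\hat{\ell}-1$ to the beginning of the string containing it, and takes these strings as samples; if fewer than $p'(v+1)$ samples result, the first PEs draw one additional sample each. The samples $V$ are sorted and splitters $f_j=V[j|V|/r-1]$ for $0<j<r$ are chosen, $f_0=-\infty$, $f_r=\infty$. Buckets are $B^j=\bigcup_i\{s\in S_i':f_j<s\le f_{j+1}\}$. *)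

theory Defs
  imports Complex_Main "HOL-Library.List_Lexorder"
begin

text \<open>Strings are lists over a linearly ordered alphabet, compared lexicographically
  (List_Lexorder). A PE's local array is a list of strings.\<close>

definition chars :: "'a list list \<Rightarrow> nat" where
  "chars X = sum_list (map length X)"

definition maxlen :: "'a list list \<Rightarrow> nat" where
  "maxlen X = Max (insert 0 (set (map length X)))"

fun str_at :: "'a list list \<Rightarrow> nat \<Rightarrow> 'a list" where
  "str_at [] n = []"
| "str_at (s # ss) n = (if n < length s then s else str_at ss (n - length s))"

definition concat_all :: "nat \<Rightarrow> (nat \<Rightarrow> 'a list list) \<Rightarrow> 'a list list" where
  "concat_all p S = concat (map S [0..<p])"

definition omega :: "nat \<Rightarrow> nat \<Rightarrow> (nat \<Rightarrow> 'a list list) \<Rightarrow> real" where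
  "omega p v S = real (chars (concat_all p S)) / (real p * (real v + 1))"

definition num_reg :: "real \<Rightarrow> 'a list list \<Rightarrow> nat" where
  "num_reg w Si = nat (\<lceil>real (chars Si) / w\<rceil> - 1)"

text \<open>Regular samples of one PE: positions floor(m * omega') for m = 1 .. ceil(||S_i||/omega') - 1,
  each shifted to the beginning of the string containing it.\<close>
definition reg_samples :: "real \<Rightarrow> 'a list list \<Rightarrow> 'a list list" where
  "reg_samples w Si = map (\<lambda>m. str_at Si (nat \<lfloor>real m * w\<rfloor>)) [1..<num_reg w Si + 1]"

definition all_reg_samples :: "nat \<Rightarrow> nat \<Rightarrow> (nat \<Rightarrow> 'a list list) \<Rightarrow> 'a list list" where
  "all_reg_samples p v S = concat (map (\<lambda>i. reg_samples (omega p v S) (S i)) [0..<p])"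

text \<open>Number of PEs (the first ones) drawing one additional sample.\<close>
definition num_extra :: "nat \<Rightarrow> nat \<Rightarrow> (nat \<Rightarrow> 'a list list) \<Rightarrow> nat" where
  "num_extra p v S = min (p * (v + 1) - length (all_reg_samples p v S)) p"

text \<open>The sorted sample array V; extra i is the additional sample of PE i.\<close>
definition samples :: "nat \<Rightarrow> nat \<Rightarrow> (nat \<Rightarrow> 'a::linorder list list) \<Rightarrow> (nat \<Rightarrow> 'a list)
    \<Rightarrow> 'a list list" where
  "samples p v S extra =
     sort (all_reg_samples p v S @ map extra [0..<num_extra p v S])"

text \<open>Membership in bucket j: f_j < s <= f_(j+1) with f_j = V[j |V|/r - 1],
  f_0 = -infinity, f_r = +infinity.\<close>
definition in_bucket :: "'a::linorder list list \<Rightarrow> nat \<Rightarrow> nat \<Rightarrow> 'a list \<Rightarrow> bool" where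
  "in_bucket V r j s =
     ((0 < j \<longrightarrow> V ! (j * (length V div r) - 1) < s) \<and>
      (j + 1 < r \<longrightarrow> s \<le> V ! ((j + 1) * (length V div r) - 1)))"

definition bucket_chars :: "nat \<Rightarrow> nat \<Rightarrow> nat \<Rightarrow> (nat \<Rightarrow> 'a::linorder list list)
    \<Rightarrow> (nat \<Rightarrow> 'a list) \<Rightarrow> nat \<Rightarrow> nat" where
  "bucket_chars p v r S extra j =
     (\<Sum>i<p. chars (filter (in_bucket (samples p v S extra) r j) (S i)))"

end

theory Submission
  imports Defs
begin

(* Split bucket j into its interior f_j < s < f_(j+1) and the upper splitter f_(j+1). The strings
   are distinct, so the splitter contributes a single string of at most maxlen S' characters.
   The interior is order-convex, so on each PE its strings occupy one contiguous block of the
   character array, and every full stride of length omega' inside that block contains a sampling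
   position whose sample lies in the interior: a PE with k_i interior samples holds at most
   (k_i + 1) omega' interior characters. Exactly p'(v+1) samples are drawn, so the interior
   samples lie strictly between V[jd-1] and V[(j+1)d-1] with d = p'(v+1)/r, whence sum k_i <= d.
   The interior thus has at most (d + p') omega' = ||S'||/r + ||S'||/(v+1) characters, so the
   bound holds even with a single maxlen S' in place of the term (1 + (v+1)/r) p' maxlen S'. *)

lemma chars_Nil [simp]: "chars [] = 0"
  by (simp add: chars_def)

lemma chars_Cons [simp]: "chars (s # ss) = length s + chars ss"
  by (simp add: chars_def)

lemma chars_append [simp]: "chars (xs @ ys) = chars xs + chars ys"
  by (simp add: chars_def)

lemma chars_filter_le: "chars (filter P xs) \<le> chars xs"
  by (induction xs) auto

lemma chars_filter_le_add:
  assumes "\<And>s. P s \<Longrightarrow> Q s \<or> R s"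
  shows "chars (filter P xs) \<le> chars (filter Q xs) + chars (filter R xs)"
  using assms by (induction xs) auto

lemma chars_filter_eq_le_maxlen:
  assumes "distinct xs"
  shows "chars (filter (\<lambda>s. s = t) xs) \<le> maxlen xs"
proof (cases "t \<in> set xs")
  case True
  then have "filter (\<lambda>s. s = t) xs = [t]"
    using assms by (induction xs) (auto simp: filter_empty_conv)
  moreover have "length t \<le> maxlen xs"
    using True by (simp add: maxlen_def)
  ultimately show ?thesis by simp
next
  case False
  then have "filter (\<lambda>s. s = t) xs = []" by (auto simp: filter_empty_conv)
  then show ?thesis by simp
qed

lemma chars_concat_all: "chars (concat_all p S) = (\<Sum>i<p. chars (S i))"
  by (induction p) (simp_all add: concat_all_def)

lemma chars_concat_all_pos_imp_pos: "0 < chars (concat_all p S) \<Longrightarrow> 0 < p"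
  by (cases "p = 0") (simp_all add: chars_concat_all)

lemma filter_concat_all: "filter P (concat_all p S) = concat_all p (\<lambda>i. filter P (S i))"
  by (simp add: concat_all_def filter_concat o_def)

lemma str_at_append_middle:
  "chars as \<le> n \<Longrightarrow> n < chars as + chars bs \<Longrightarrow> str_at (as @ bs @ cs) n \<in> set bs"
proof (induction as arbitrary: n)
  case Nil
  then show ?case by (induction bs arbitrary: n) auto
next
  case (Cons a as)
  then show ?case by (auto simp: diff_diff_add)
qed

definition order_convex :: "('a::order \<Rightarrow> bool) \<Rightarrow> bool" where
  "order_convex Q \<longleftrightarrow> (\<forall>a b x. Q a \<longrightarrow> Q b \<longrightarrow> a \<le> x \<longrightarrow> x \<le> b \<longrightarrow> Q x)"

lemma sorted_order_convex_split:
  assumes "sorted xs" and "order_convex Q"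
  obtains as cs where "xs = as @ filter Q xs @ cs"
proof -
  define ys where "ys = dropWhile (\<lambda>x. \<not> Q x) xs"
  define cs where "cs = dropWhile Q ys"
  have hd_le: "hd zs \<le> z" if "sorted zs" "z \<in> set zs" for zs and z :: 'a
    using that by (cases zs) auto
  have no_Q_cs: "\<not> Q y" if "y \<in> set cs" for y
  proof
    assume "Q y"
    from that have "cs \<noteq> []" by auto
    then have "ys \<noteq> []" and "\<not> Q (hd cs)"
      unfolding cs_def by (auto simp: hd_dropWhile)
    then have "Q (hd ys)"
      unfolding ys_def using hd_dropWhile[of "\<lambda>x. \<not> Q x" xs] by blast
    have "sorted ys" "sorted cs"
      using \<open>sorted xs\<close> by (simp_all add: ys_def cs_def sorted_dropWhile)
    have "hd cs \<in> set ys"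
      using \<open>cs \<noteq> []\<close> hd_in_set set_dropWhileD unfolding cs_def by metis
    then have "hd ys \<le> hd cs"
      using \<open>sorted ys\<close> by (rule hd_le[rotated])
    moreover have "hd cs \<le> y"
      using \<open>sorted cs\<close> that by (rule hd_le)
    ultimately have "Q (hd cs)"
      using \<open>order_convex Q\<close> \<open>Q (hd ys)\<close> \<open>Q y\<close> unfolding order_convex_def by blast
    with \<open>\<not> Q (hd cs)\<close> show False ..
  qed
  have xs: "xs = takeWhile (\<lambda>x. \<not> Q x) xs @ takeWhile Q ys @ cs"
    unfolding ys_def cs_def by simp
  moreover from no_Q_cs have "filter Q cs = []"
    by (blast intro: filter_False)
  moreover have "filter Q (takeWhile (\<lambda>x. \<not> Q x) xs) = []"
    by (rule filter_False) (blast dest: set_takeWhileD)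
  moreover have "filter Q (takeWhile Q ys) = takeWhile Q ys"
    by (rule filter_True) (blast dest: set_takeWhileD)
  ultimately have "filter Q xs = takeWhile Q ys"
    by (metis filter_append append_Nil append_Nil2)
  with xs show thesis
    by (metis that)
qed

lemma num_reg_le:
  assumes "0 < w"
  shows "real (num_reg w xs) \<le> real (chars xs) / w"
proof -
  have "0 \<le> real (chars xs) / w"
    using assms by simp
  then show ?thesis
    unfolding num_reg_def using ceiling_less_iff[of "real (chars xs) / w"] by linarith
qed

lemma num_reg_ge:
  "real (chars xs) / w - 1 \<le> real (num_reg w xs)"
  unfolding num_reg_def using le_of_int_ceiling[of "real (chars xs) / w"] by linarith

lemma le_num_reg_iff:
  assumes "0 < w" and "0 < m"
  shows "m \<le> num_reg w xs \<longleftrightarrow> real m * w < real (chars xs)"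
proof -
  have "m \<le> num_reg w xs \<longleftrightarrow> int m < \<lceil>real (chars xs) / w\<rceil>"
    unfolding num_reg_def using \<open>0 < m\<close> by linarith
  also have "\<dots> \<longleftrightarrow> real m * w < real (chars xs)"
    using \<open>0 < w\<close> by (simp add: less_ceiling_iff pos_less_divide_eq)
  finally show ?thesis .
qed

lemma card_multiples_in_interval:
  fixes w A L :: real
  assumes "0 < w" and "0 \<le> A"
  shows "L / w - 1 \<le> real (card {m::nat. 0 < m \<and> A \<le> real m * w \<and> real m * w < A + L})"
proof -
  define ca where "ca = \<lceil>A / w\<rceil>"
  define cb where "cb = \<lceil>(A + L) / w\<rceil>"
  define a where "a = max 1 (nat ca)"
  define b where "b = nat cb"
  have lo: "A \<le> real m * w \<longleftrightarrow> ca \<le> int m" for m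
    using \<open>0 < w\<close> by (simp add: ca_def ceiling_le_iff pos_divide_le_eq)
  have hi: "real m * w < A + L \<longleftrightarrow> int m < cb" for m
    using \<open>0 < w\<close> by (simp add: cb_def less_ceiling_iff pos_less_divide_eq)
  have "{m::nat. 0 < m \<and> A \<le> real m * w \<and> real m * w < A + L} = {a..<b}"
    unfolding lo hi a_def b_def by auto
  moreover have "real a \<le> A / w + 1"
  proof -
    have "0 \<le> A / w"
      using \<open>0 < w\<close> \<open>0 \<le> A\<close> by simp
    then show ?thesis
      unfolding a_def ca_def using ceiling_correct[of "A / w"] by (simp add: of_nat_max)
  qed
  moreover have "(A + L) / w \<le> real b"
    unfolding b_def cb_def using ceiling_correct[of "(A + L) / w"] by linarith
  ultimately show ?thesis
    by (simp add: add_divide_distrib)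
qed

lemma chars_filter_le_reg_samples:
  assumes "sorted xs" and "order_convex Q" and "0 < w"
  shows "real (chars (filter Q xs)) \<le> (real (length (filter Q (reg_samples w xs))) + 1) * w"
proof -
  obtain as cs where xs: "xs = as @ filter Q xs @ cs"
    using sorted_order_convex_split[OF assms(1,2)] .
  define A where "A = chars as"
  define L where "L = chars (filter Q xs)"
  define M where "M = {m::nat. 0 < m \<and> real A \<le> real m * w \<and> real m * w < real A + real L}"
  define P where "P = (\<lambda>m. Q (str_at xs (nat \<lfloor>real m * w\<rfloor>)))"
  have "M \<subseteq> {m \<in> {1..<num_reg w xs + 1}. P m}"
  proof
    fix m assume "m \<in> M"
    then have "0 < m" and lo: "real A \<le> real m * w" and hi: "real m * w < real A + real L"
      by (simp_all add: M_def)
    have "A \<le> nat \<lfloor>real m * w\<rfloor>" "nat \<lfloor>real m * w\<rfloor> < A + L"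
      using lo hi \<open>0 < w\<close> by (simp_all add: le_nat_iff le_floor_iff nat_less_iff floor_less_iff)
    then have "str_at (as @ filter Q xs @ cs) (nat \<lfloor>real m * w\<rfloor>) \<in> set (filter Q xs)"
      unfolding A_def L_def by (rule str_at_append_middle)
    then have "str_at xs (nat \<lfloor>real m * w\<rfloor>) \<in> set (filter Q xs)"
      by (simp only: xs[symmetric])
    then have "P m"
      by (simp add: P_def)
    moreover have "chars xs = A + L + chars cs"
      using arg_cong[OF xs, of chars] by (simp add: A_def L_def)
    then have "real m * w < real (chars xs)"
      using hi by simp
    then have "m \<le> num_reg w xs"
      using le_num_reg_iff[OF \<open>0 < w\<close> \<open>0 < m\<close>] by blast
    ultimately show "m \<in> {m \<in> {1..<num_reg w xs + 1}. P m}"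
      using \<open>0 < m\<close> by simp
  qed
  then have "card M \<le> card {m \<in> {1..<num_reg w xs + 1}. P m}"
    by (intro card_mono) simp_all
  also have "\<dots> = length (filter Q (reg_samples w xs))"
    by (simp add: reg_samples_def filter_map o_def P_def distinct_card[symmetric] del: upt_Suc)
  finally have "real L / w - 1 \<le> real (length (filter Q (reg_samples w xs)))"
    using card_multiples_in_interval[OF \<open>0 < w\<close>, of "real A" "real L"] unfolding M_def by linarith
  then show ?thesis
    using \<open>0 < w\<close> by (simp add: L_def pos_divide_le_eq algebra_simps)
qed

lemma omega_pos:
  assumes "0 < chars (concat_all p S)"
  shows "0 < omega p v S"
  using assms chars_concat_all_pos_imp_pos[OF assms] by (simp add: omega_def)

lemma length_all_reg_samples:
  "length (all_reg_samples p v S) = (\<Sum>i<p. num_reg (omega p v S) (S i))"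
  by (simp add: all_reg_samples_def length_concat o_def reg_samples_def
      interv_sum_list_conv_sum_set_nat atLeast0LessThan del: upt_Suc)

lemma length_samples:
  assumes "0 < chars (concat_all p S)"
  shows "length (samples p v S extra) = p * (v + 1)"
proof -
  define w where "w = omega p v S"
  define N where "N = length (all_reg_samples p v S)"
  have "0 < w"
    unfolding w_def using assms by (rule omega_pos)
  have "0 < p"
    using assms by (rule chars_concat_all_pos_imp_pos)
  have "(\<Sum>i<p. real (chars (S i)) / w) = real (chars (concat_all p S)) / w"
    by (simp add: chars_concat_all sum_divide_distrib)
  also have "\<dots> = real p * (real v + 1)"
    using assms \<open>0 < p\<close> by (simp add: w_def omega_def)
  finally have total: "(\<Sum>i<p. real (chars (S i)) / w) = real p * (real v + 1)" .
  have N: "real N = (\<Sum>i<p. real (num_reg w (S i)))"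
    by (simp add: N_def w_def length_all_reg_samples)
  have "real N \<le> real p * (real v + 1)"
    unfolding N total[symmetric] by (intro sum_mono num_reg_le \<open>0 < w\<close>)
  moreover have "(\<Sum>i<p. real (chars (S i)) / w - 1) \<le> real N"
    unfolding N by (intro sum_mono num_reg_ge)
  then have "real p * (real v + 1) - real p \<le> real N"
    by (simp add: sum_subtractf total)
  ultimately have "real N \<le> real (p * (v + 1))" and "real (p * (v + 1)) \<le> real (N + p)"
    by (simp_all add: algebra_simps)
  then have "N \<le> p * (v + 1)" and "p * (v + 1) - N \<le> p"
    unfolding of_nat_le_iff by simp_all
  then show ?thesis
    by (simp add: samples_def num_extra_def N_def)
qed

lemma chars_filter_le_samples:
  assumes "0 < chars (concat_all p S)" and "\<And>i. i < p \<Longrightarrow> sorted (S i)"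
    and "order_convex Q"
  shows "real (chars (filter Q (concat_all p S)))
    \<le> (real (length (filter Q (samples p v S extra))) + real p) * omega p v S"
proof -
  define w where "w = omega p v S"
  have "0 < w"
    unfolding w_def using assms(1) by (rule omega_pos)
  have "real (chars (filter Q (concat_all p S)))
      \<le> (\<Sum>i<p. (real (length (filter Q (reg_samples w (S i)))) + 1) * w)"
    unfolding filter_concat_all chars_concat_all of_nat_sum
    by (intro sum_mono chars_filter_le_reg_samples assms(2,3) \<open>0 < w\<close>) simp
  also have "\<dots> = (real (\<Sum>i<p. length (filter Q (reg_samples w (S i)))) + real p) * w"
    unfolding sum_distrib_right[symmetric] by (simp add: sum.distrib)
  also have "\<dots> = (real (length (filter Q (all_reg_samples p v S))) + real p) * w"
    by (simp add: all_reg_samples_def w_def filter_concat length_concat o_def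
        interv_sum_list_conv_sum_set_nat atLeast0LessThan)
  also have "\<dots> \<le> (real (length (filter Q (samples p v S extra))) + real p) * w"
    using \<open>0 < w\<close> by (simp add: samples_def filter_sort)
  finally show ?thesis
    by (simp add: w_def)
qed

definition bucket_interior :: "'a::linorder list \<Rightarrow> nat \<Rightarrow> nat \<Rightarrow> 'a \<Rightarrow> bool" where
  "bucket_interior V r j s \<longleftrightarrow>
     (0 < j \<longrightarrow> V ! (j * (length V div r) - 1) < s) \<and>
     (j + 1 < r \<longrightarrow> s < V ! ((j + 1) * (length V div r) - 1))"

lemma order_convex_bucket_interior: "order_convex (bucket_interior V r j)"
  unfolding order_convex_def bucket_interior_def by (meson less_le_trans le_less_trans)

lemma length_filter_bucket_interior:
  assumes "sorted V" and "r dvd length V" and "j < r"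
  shows "length (filter (bucket_interior V r j) V) \<le> length V div r"
proof -
  define d where "d = length V div r"
  have len: "length V = r * d"
    using assms(2) by (simp add: d_def)
  have "i \<in> {j * d..<(j + 1) * d}" if "i < length V" and "bucket_interior V r j (V ! i)" for i
  proof -
    have lo: "0 < j \<Longrightarrow> V ! (j * d - 1) < V ! i"
      and hi: "j + 1 < r \<Longrightarrow> V ! i < V ! ((j + 1) * d - 1)"
      using that(2) by (simp_all add: bucket_interior_def d_def)
    have "j * d \<le> i"
    proof (rule ccontr)
      assume "\<not> j * d \<le> i"
      moreover have "j * d \<le> length V"
        using \<open>j < r\<close> len by simp
      ultimately have "V ! i \<le> V ! (j * d - 1)"
        using sorted_nth_mono[OF \<open>sorted V\<close>, of i "j * d - 1"] by simp
      moreover have "0 < j"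
        using \<open>\<not> j * d \<le> i\<close> by (cases j) simp_all
      ultimately show False
        using lo by simp
    qed
    moreover have "i < (j + 1) * d"
    proof (cases "j + 1 < r")
      case True
      show ?thesis
      proof (rule ccontr)
        assume "\<not> i < (j + 1) * d"
        then have "V ! ((j + 1) * d - 1) \<le> V ! i"
          using sorted_nth_mono[OF \<open>sorted V\<close>] \<open>i < length V\<close> by simp
        with hi True show False
          by simp
      qed
    next
      case False
      with \<open>j < r\<close> have "r = j + 1"
        by simp
      with \<open>i < length V\<close> len show ?thesis
        by (simp add: mult.commute)
    qed
    ultimately show ?thesis
      by simp
  qed
  then have "card {i. i < length V \<and> bucket_interior V r j (V ! i)} \<le> card {j * d..<(j + 1) * d}"
    by (intro card_mono) auto
  then show ?thesis
    by (simp add: length_filter_conv_card d_def)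
qed

lemma chars_filter_in_bucket_le:
  assumes "distinct xs"
  shows "chars (filter (in_bucket V r j) xs) \<le> chars (filter (bucket_interior V r j) xs) + maxlen xs"
proof -
  define t where "t = V ! ((j + 1) * (length V div r) - 1)"
  have "chars (filter (in_bucket V r j) xs)
      \<le> chars (filter (bucket_interior V r j) xs) + chars (filter (\<lambda>s. s = t) xs)"
    by (rule chars_filter_le_add) (auto simp: in_bucket_def bucket_interior_def t_def)
  then show ?thesis
    using chars_filter_eq_le_maxlen[OF assms, of t] by linarith
qed

lemma chars_filter_bucket_interior_le:
  assumes "0 < chars (concat_all p S)" and "\<And>i. i < p \<Longrightarrow> sorted (S i)"
    and "0 < v" and "r dvd p" and "j < r"
  shows "real (chars (filter (bucket_interior (samples p v S extra) r j) (concat_all p S)))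
    \<le> (1 + real r / real v) * real (chars (concat_all p S)) / real r"
proof -
  define V where "V = samples p v S extra"
  define C where "C = real (chars (concat_all p S))"
  have "0 < p"
    using assms(1) by (rule chars_concat_all_pos_imp_pos)
  have lenV: "length V = p * (v + 1)"
    using assms(1) by (simp add: V_def length_samples)
  have sampled: "real (chars (filter (bucket_interior V r j) (concat_all p S)))
      \<le> (real (length (filter (bucket_interior V r j) V)) + real p) * omega p v S"
    unfolding V_def by (intro chars_filter_le_samples assms(1,2) order_convex_bucket_interior)
  have "length (filter (bucket_interior V r j) V) \<le> length V div r"
    using lenV \<open>r dvd p\<close> \<open>j < r\<close> by (intro length_filter_bucket_interior) (simp_all add: V_def samples_def)
  then have "(real (length (filter (bucket_interior V r j) V)) + real p) * omega p v S
      \<le> (real (length V div r) + real p) * omega p v S"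
    using omega_pos[OF assms(1), of v] by (intro mult_right_mono) simp_all
  moreover have "real (length V div r) = real p * (real v + 1) / real r"
    using \<open>r dvd p\<close> by (simp add: lenV real_of_nat_div add_divide_distrib ring_distribs)
  ultimately have "real (chars (filter (bucket_interior V r j) (concat_all p S)))
      \<le> (real p * (real v + 1) / real r + real p) * omega p v S"
    using sampled by simp
  also have "\<dots> = C / real r + C / (real v + 1)"
    using \<open>0 < p\<close> \<open>j < r\<close> by (simp add: omega_def C_def divide_simps) (simp add: algebra_simps)
  also have "\<dots> \<le> C / real r + C / real v"
    using \<open>0 < v\<close> by (simp add: C_def frac_le)
  also have "\<dots> = (1 + real r / real v) * C / real r"
    using \<open>0 < v\<close> \<open>j < r\<close> by (simp add: field_simps)
  finally show ?thesis
    by (simp add: V_def C_def)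
qed

theorem theorem18:
  fixes p v r :: nat
    and S :: "nat \<Rightarrow> 'a::linorder list list"
    and extra :: "nat \<Rightarrow> 'a list"
    and j :: nat
  assumes "0 < p" and "0 < r" and "r dvd p" and "0 < v"
    and "\<And>i. i < p \<Longrightarrow> sorted (S i)"
    and "distinct (concat_all p S)"
    and "\<And>i. i < num_extra p v S \<Longrightarrow> extra i \<in> set (S i)"
    and "j < r"
  shows "real (bucket_chars p v r S extra j)
    \<le> (1 + real r / real v) * real (chars (concat_all p S)) / real r
       + (1 + (real v + 1) / real r) * real p * real (maxlen (concat_all p S))"
proof -
  define V where "V = samples p v S extra"
  have bucket: "bucket_chars p v r S extra j = chars (filter (in_bucket V r j) (concat_all p S))"
    by (simp add: bucket_chars_def V_def filter_concat_all chars_concat_all)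
  have "1 \<le> (1 + (real v + 1) / real r) * real p"
    using mult_mono[of 1 "1 + (real v + 1) / real r" 1 "real p"] \<open>0 < p\<close> by simp
  then have maxlen: "real (maxlen (concat_all p S))
      \<le> (1 + (real v + 1) / real r) * real p * real (maxlen (concat_all p S))"
    by (simp add: mult_le_cancel_right1)
  show ?thesis
  proof (cases "chars (concat_all p S) = 0")
    case True
    then show ?thesis
      using chars_filter_le[of "in_bucket V r j" "concat_all p S"] unfolding bucket by simp
  next
    case False
    then have "real (chars (filter (bucket_interior V r j) (concat_all p S)))
        \<le> (1 + real r / real v) * real (chars (concat_all p S)) / real r"
      unfolding V_def using assms(3-5,8) by (intro chars_filter_bucket_interior_le) simp_all
    moreover have "chars (filter (in_bucket V r j) (concat_all p S))
        \<le> chars (filter (bucket_interior V r j) (concat_all p S)) + maxlen (concat_all p S)"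
      using assms(6) by (rule chars_filter_in_bucket_le)
    ultimately show ?thesis
      unfolding bucket using maxlen by linarith
  qed
qed

end
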